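(* Let $\mathcal{X}$ be a nonempty finite set, let $k$ be a strong kernel on $\mathcal{X}$, and let $(T,w)$ be a hierarchy on $\mathcal{X}$ inducing $k$. Let $n\in\mathbb{N}$ and let $X,Y\subseteq\mathcal{X}$ with $|X|=|Y|=n$. Then $$K^k_{\mathfrak{B}}(X,Y)=\sum_{v\in V(T)}\omega(v)\cdot\min\{|X_v|,|Y_v|\}=K_{\sqcap}\big(H^k(X),H^k(Y)\big).$$
   Context: A rooted tree is a finite tree $T$ with a distinguished root vertex $r$. For a vertex $v$, its parent $p(v)$ is the vertex following $v$ on the unique path from $v$ to $r$, with the convention $p(r)=r$. The ancestors of $v$ are the vertices on the path from $v$ to $r$ (including $v$ and $r$); the depth of $v$ is the number of edges on this path. The lowest common ancestor $\mathrm{LCA}(u,v)$ is the unique vertex of maximum depth that is an ancestor of both $u$ and $v$. A hierarchy on a set $\mathcal{X}$ is a pair $(T,w)$ where $T$ is a rooted tree whose set of leaves is exactly $\mathcal{X}$, and $w:V(T)\to\mathbb{R}_{\ge 0}$ satisfies $w(v)\ge w(p(v))$ for all $v\in V(T)$. The kernel induced by $(T,w)$ is $k(x,y)=w(\mathrm{LCA}(x,y))$ for $x,y\in\mathcal{X}$. A strong kernel on a set $\mathcal{X}$ is a symmetric function $k:\mathcal{X}\times\mathcal{X}\to\mathbb{R}_{\ge 0}$ such that $k(x,y)\ge\min\{k(x,z),k(z,y)\}$ for all $x,y,z\in\mathcal{X}$. Given a hierarchy $(T,w)$ with root $r$, the additive weight $\omega:V(T)\to\mathbb{R}_{\ge0}$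 is $\omega(v)=w(v)-w(p(v))$ for $v\ne r$ and $\omega(r)=w(r)$. For $X\subseteq\mathcal{X}$ and $v\in V(T)$, $X_v$ denotes the set of elements of $X$ that are leaves of the subtree of $T$ rooted at $v$ (i.e. elements of $X$ having $v$ as an ancestor). The histogram of $X$ is the vector $H^k(X)\in\mathbb{R}^{V(T)}$ with $[H^k(X)]_v=\omega(v)\cdot|X_v|$. The histogram intersection kernel on $\mathbb{R}^t$ is $K_\sqcap(g,h)=\sum_{i=1}^t\min\{g_i,h_i\}$. For $X,Y$ of equal cardinality, $\mathfrak{B}(X,Y)$ is the set of all bijections between $X$ and $Y$ (viewed as sets of pairs $(x,y)$), and the optimal assignment kernel is $K^k_{\mathfrak{B}}(X,Y)=\max_{B\in\mathfrak{B}(X,Y)}\sum_{(x,y)\in B}k(x,y)$. *)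

theory Defs
  imports Complex_Main
begin

definition rooted_tree :: "'v set \<Rightarrow> 'v \<Rightarrow> ('v \<Rightarrow> 'v) \<Rightarrow> bool" where
  "rooted_tree V r p \<longleftrightarrow> finite V \<and> r \<in> V \<and> p ` V \<subseteq> V \<and> p r = r \<and>
     (\<forall>v\<in>V. \<exists>n. (p ^^ n) v = r)"

definition ancestors :: "('v \<Rightarrow> 'v) \<Rightarrow> 'v \<Rightarrow> 'v set" where
  "ancestors p v = {(p ^^ n) v | n. True}"

definition depth :: "'v \<Rightarrow> ('v \<Rightarrow> 'v) \<Rightarrow> 'v \<Rightarrow> nat" where
  "depth r p v = (LEAST n. (p ^^ n) v = r)"

definition LCA :: "'v \<Rightarrow> ('v \<Rightarrow> 'v) \<Rightarrow> 'v \<Rightarrow> 'v \<Rightarrow> 'v" where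
  "LCA r p u v = (THE a. a \<in> ancestors p u \<inter> ancestors p v \<and>
      (\<forall>b \<in> ancestors p u \<inter> ancestors p v. depth r p b \<le> depth r p a))"

definition leaves :: "'v set \<Rightarrow> ('v \<Rightarrow> 'v) \<Rightarrow> 'v set" where
  "leaves V p = {v \<in> V. \<not> (\<exists>u\<in>V. u \<noteq> v \<and> p u = v)}"

definition hierarchy :: "'v set \<Rightarrow> 'v set \<Rightarrow> 'v \<Rightarrow> ('v \<Rightarrow> 'v) \<Rightarrow> ('v \<Rightarrow> real) \<Rightarrow> bool" where
  "hierarchy \<X> V r p w \<longleftrightarrow> rooted_tree V r p \<and> leaves V p = \<X> \<and>
     (\<forall>v\<in>V. 0 \<le> w v \<and> w v \<ge> w (p v))"

definition induced_kernel :: "'v \<Rightarrow> ('v \<Rightarrow> 'v) \<Rightarrow> ('v \<Rightarrow> real) \<Rightarrow> 'v \<Rightarrow> 'v \<Rightarrow> real" where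
  "induced_kernel r p w x y = w (LCA r p x y)"

definition strong_kernel :: "'a set \<Rightarrow> ('a \<Rightarrow> 'a \<Rightarrow> real) \<Rightarrow> bool" where
  "strong_kernel \<X> k \<longleftrightarrow> (\<forall>x\<in>\<X>. \<forall>y\<in>\<X>. k x y = k y x \<and> 0 \<le> k x y) \<and>
     (\<forall>x\<in>\<X>. \<forall>y\<in>\<X>. \<forall>z\<in>\<X>. k x y \<ge> min (k x z) (k z y))"

definition add_weight :: "'v \<Rightarrow> ('v \<Rightarrow> 'v) \<Rightarrow> ('v \<Rightarrow> real) \<Rightarrow> 'v \<Rightarrow> real" where
  "add_weight r p w v = (if v = r then w r else w v - w (p v))"

definition below :: "('v \<Rightarrow> 'v) \<Rightarrow> 'v set \<Rightarrow> 'v \<Rightarrow> 'v set" where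
  "below p X v = {x \<in> X. v \<in> ancestors p x}"

definition histogram :: "'v \<Rightarrow> ('v \<Rightarrow> 'v) \<Rightarrow> ('v \<Rightarrow> real) \<Rightarrow> 'v set \<Rightarrow> 'v \<Rightarrow> real" where
  "histogram r p w X v = add_weight r p w v * real (card (below p X v))"

definition hist_intersection :: "'i set \<Rightarrow> ('i \<Rightarrow> real) \<Rightarrow> ('i \<Rightarrow> real) \<Rightarrow> real" where
  "hist_intersection I g h = (\<Sum>i\<in>I. min (g i) (h i))"

definition opt_assign :: "('a \<Rightarrow> 'a \<Rightarrow> real) \<Rightarrow> 'a set \<Rightarrow> 'a set \<Rightarrow> real" where
  "opt_assign k X Y = Max {\<Sum>x\<in>X. k x (f x) | f. bij_betw f X Y}"

end

theory Submission
  imports Defs "HOL-Library.FuncSet"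
begin

text \<open>Writing \<omega> for the additive weight, every vertex satisfies w u = \<Sum> of \<omega> over the
  ancestors of u, and the ancestors of LCA x y are exactly the common ancestors of x and y.
  Hence the value of an assignment f counts, for each vertex v, \<omega> v times the number of pairs
  (x, f x) lying both below v, which is at most min |X_v| |Y_v|. Equality is attained by
  greedily matching a pair whose LCA is deepest: removing it lowers min |X_v| |Y_v| by one
  exactly at the common ancestors of the pair, because below any other ancestor of one of
  its elements no element of the other set can lie.\<close>

lemma ancestors_refl: "x \<in> ancestors p x"
  unfolding ancestors_def by (auto intro: exI[of _ 0])

lemma parent_in_ancestors: "p x \<in> ancestors p x"
  unfolding ancestors_def by (auto intro!: exI[of _ 1])

lemma ancestors_trans: "a \<in> ancestors p b \<Longrightarrow> b \<in> ancestors p c \<Longrightarrow> a \<in> ancestors p c"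
  unfolding ancestors_def by (auto simp: comp_apply[of "p^^_" "p^^_", symmetric] simp flip: funpow_add)

lemma ancestors_linear:
  assumes "a \<in> ancestors p x" "b \<in> ancestors p x"
  shows "a \<in> ancestors p b \<or> b \<in> ancestors p a"
proof -
  obtain i j where a: "a = (p^^i) x" and b: "b = (p^^j) x"
    using assms unfolding ancestors_def by auto
  have "a = (p^^(i-j)) b \<or> b = (p^^(j-i)) a"
    unfolding a b by (metis comp_apply funpow_add le_add_diff_inverse2 nat_le_linear)
  then show ?thesis unfolding ancestors_def by auto
qed

lemma ancestors_eq_insert_parent: "ancestors p u = insert u (ancestors p (p u))"
proof
  show "ancestors p u \<subseteq> insert u (ancestors p (p u))"
  proof
    fix a assume "a \<in> ancestors p u"
    then obtain i where a: "a = (p^^i) u" unfolding ancestors_def by auto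
    then show "a \<in> insert u (ancestors p (p u))"
      by (cases i) (auto simp: ancestors_def funpow_swap1)
  qed
  show "insert u (ancestors p (p u)) \<subseteq> ancestors p u"
    using ancestors_refl parent_in_ancestors ancestors_trans by fast
qed

lemma ancestors_subset:
  assumes "rooted_tree V r p" "x \<in> V"
  shows "ancestors p x \<subseteq> V"
proof -
  have "(p^^n) x \<in> V" for n
    using assms by (induction n) (auto simp: rooted_tree_def)
  then show ?thesis unfolding ancestors_def by auto
qed

lemma finite_ancestors: "rooted_tree V r p \<Longrightarrow> x \<in> V \<Longrightarrow> finite (ancestors p x)"
  using ancestors_subset rooted_tree_def finite_subset by metis

lemma ancestors_root: "rooted_tree V r p \<Longrightarrow> ancestors p r = {r}"
proof -
  assume "rooted_tree V r p"
  then have "(p^^n) r = r" for n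
    by (induction n) (auto simp: rooted_tree_def)
  then show ?thesis unfolding ancestors_def by auto
qed

lemma funpow_depth: "rooted_tree V r p \<Longrightarrow> x \<in> V \<Longrightarrow> (p^^depth r p x) x = r"
  unfolding depth_def rooted_tree_def by (metis (mono_tags, lifting) LeastI_ex)

lemma root_in_ancestors: "rooted_tree V r p \<Longrightarrow> x \<in> V \<Longrightarrow> r \<in> ancestors p x"
  using funpow_depth unfolding ancestors_def by (metis (mono_tags, lifting) mem_Collect_eq)

lemma depth_less_ancestor:
  assumes T: "rooted_tree V r p" and "b \<in> V" and "a \<in> ancestors p b" and "a \<noteq> b"
  shows "depth r p a < depth r p b"
proof -
  obtain i where a: "a = (p^^i) b" using assms(3) unfolding ancestors_def by auto
  define d where "d = depth r p b"
  have d: "(p^^d) b = r" using funpow_depth[OF T \<open>b \<in> V\<close>] by (simp add: d_def)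
  show ?thesis
  proof (cases "d \<le> i")
    case True
    then have "a \<in> ancestors p r"
      unfolding a ancestors_def by (metis (mono_tags) d comp_apply funpow_add le_add_diff_inverse2 mem_Collect_eq)
    then have "a = r" using ancestors_root[OF T] by simp
    moreover have "d \<noteq> 0" using d \<open>a = r\<close> \<open>a \<noteq> b\<close> by (metis funpow_0)
    ultimately show ?thesis by (simp add: depth_def d_def)
  next
    case False
    then have "(p^^(d-i)) a = r"
      unfolding a using d by (metis comp_apply funpow_add le_add_diff_inverse2 nat_le_linear)
    then have "depth r p a \<le> d - i" unfolding depth_def by (rule Least_le)
    moreover have "i > 0" using \<open>a \<noteq> b\<close> a by (cases i) auto
    ultimately show ?thesis using False d_def by linarith
  qed
qed

lemma LCA_deepest_common_ancestor:
  assumes T: "rooted_tree V r p" and "x \<in> V" "y \<in> V"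
  shows "LCA r p x y \<in> ancestors p x \<inter> ancestors p y"
    and "\<And>b. b \<in> ancestors p x \<inter> ancestors p y \<Longrightarrow> depth r p b \<le> depth r p (LCA r p x y)"
proof -
  let ?C = "ancestors p x \<inter> ancestors p y"
  have "finite ?C" using finite_ancestors[OF T \<open>x \<in> V\<close>] by simp
  moreover have "?C \<noteq> {}" using root_in_ancestors[OF T] assms by blast
  ultimately obtain l where l: "l \<in> ?C" and "Max (depth r p ` ?C) = depth r p l"
    by (rule obtains_MAX)
  with \<open>finite ?C\<close> have lmax: "\<And>b. b \<in> ?C \<Longrightarrow> depth r p b \<le> depth r p l"
    by (metis Max_ge finite_imageI imageI)
  have "LCA r p x y = l"
    unfolding LCA_def
  proof (rule the_equality)
    fix a assume a: "a \<in> ?C \<and> (\<forall>b\<in>?C. depth r p b \<le> depth r p a)"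
    have "a \<in> V" "l \<in> V" using a l ancestors_subset[OF T \<open>x \<in> V\<close>] by auto
    have "depth r p a = depth r p l" using a l lmax by (simp add: order_antisym)
    moreover have "a \<in> ancestors p l \<or> l \<in> ancestors p a"
      using ancestors_linear[of a p x l] a l by blast
    ultimately show "a = l"
      using depth_less_ancestor[OF T \<open>l \<in> V\<close>, of a] depth_less_ancestor[OF T \<open>a \<in> V\<close>, of l]
      by fastforce
  qed (use l lmax in blast)
  then show "LCA r p x y \<in> ?C" "\<And>b. b \<in> ?C \<Longrightarrow> depth r p b \<le> depth r p (LCA r p x y)"
    using l lmax by auto
qed

lemma LCA_commute: "LCA r p x y = LCA r p y x"
  unfolding LCA_def by (simp add: Int_commute)

lemma ancestors_LCA:
  assumes T: "rooted_tree V r p" and "x \<in> V" "y \<in> V"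
  shows "ancestors p (LCA r p x y) = ancestors p x \<inter> ancestors p y"
proof
  let ?l = "LCA r p x y"
  note L = LCA_deepest_common_ancestor[OF assms]
  show "ancestors p ?l \<subseteq> ancestors p x \<inter> ancestors p y"
    using L(1) ancestors_trans by fast
  show "ancestors p x \<inter> ancestors p y \<subseteq> ancestors p ?l"
  proof
    fix b assume b: "b \<in> ancestors p x \<inter> ancestors p y"
    show "b \<in> ancestors p ?l"
    proof (rule ccontr)
      assume nb: "b \<notin> ancestors p ?l"
      then have "?l \<in> ancestors p b" "?l \<noteq> b"
        using ancestors_linear[of b p x ?l] b L(1) ancestors_refl by blast+
      moreover have "b \<in> V" using b ancestors_subset[OF T \<open>x \<in> V\<close>] by blast
      ultimately show False using depth_less_ancestor[OF T] L(2)[OF b] by (meson leD)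
    qed
  qed
qed

lemma weight_eq_sum_add_weight:
  assumes T: "rooted_tree V r p" and "u \<in> V"
  shows "w u = (\<Sum>v\<in>ancestors p u. add_weight r p w v)"
  using \<open>u \<in> V\<close>
proof (induction "depth r p u" arbitrary: u rule: less_induct)
  case less
  show ?case
  proof (cases "u = r")
    case True
    then show ?thesis using ancestors_root[OF T] by (simp add: add_weight_def)
  next
    case False
    have "p u \<in> V" using T less.prems unfolding rooted_tree_def by blast
    have "p u \<noteq> u"
    proof
      assume "p u = u"
      then have "(p^^n) u = u" for n by (induction n) auto
      then show False using funpow_depth[OF T less.prems] False by metis
    qed
    then have less_depth: "depth r p (p u) < depth r p u"
      using depth_less_ancestor[OF T less.prems parent_in_ancestors] by blast
    have "u \<notin> ancestors p (p u)"
      using depth_less_ancestor[OF T \<open>p u \<in> V\<close>] less_depth \<open>p u \<noteq> u\<close> by fastforce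
    moreover have "w u = add_weight r p w u + w (p u)"
      using False by (simp add: add_weight_def)
    ultimately show ?thesis
      using less.hyps[OF less_depth \<open>p u \<in> V\<close>] finite_ancestors[OF T \<open>p u \<in> V\<close>]
      by (simp add: ancestors_eq_insert_parent[of p u])
  qed
qed

lemma weight_LCA_eq_sum:
  assumes T: "rooted_tree V r p" and "x \<in> V" "y \<in> V"
  shows "w (LCA r p x y) =
    (\<Sum>v\<in>V. if v \<in> ancestors p x \<and> v \<in> ancestors p y then add_weight r p w v else 0)"
proof -
  have "LCA r p x y \<in> V"
    using LCA_deepest_common_ancestor(1)[OF assms] ancestors_subset[OF T \<open>x \<in> V\<close>] by blast
  then have "w (LCA r p x y) = (\<Sum>v\<in>ancestors p x \<inter> ancestors p y. add_weight r p w v)"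
    using weight_eq_sum_add_weight[OF T] ancestors_LCA[OF assms] by metis
  also have "ancestors p x \<inter> ancestors p y = {v\<in>V. v \<in> ancestors p x \<and> v \<in> ancestors p y}"
    using ancestors_subset[OF T \<open>x \<in> V\<close>] by blast
  finally show ?thesis
    using T by (simp add: sum.inter_filter rooted_tree_def)
qed

abbreviation tree_intersection ::
    "'v set \<Rightarrow> 'v \<Rightarrow> ('v \<Rightarrow> 'v) \<Rightarrow> ('v \<Rightarrow> real) \<Rightarrow> 'v set \<Rightarrow> 'v set \<Rightarrow> real" where
  "tree_intersection V r p w X Y \<equiv>
     \<Sum>v\<in>V. add_weight r p w v * min (real (card (below p X v))) (real (card (below p Y v)))"

lemma add_weight_nonneg: "hierarchy \<X> V r p w \<Longrightarrow> v \<in> V \<Longrightarrow> 0 \<le> add_weight r p w v"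
  unfolding hierarchy_def add_weight_def by auto

lemma assignment_le_tree_intersection:
  assumes H: "hierarchy \<X> V r p w" and "X \<subseteq> V" "Y \<subseteq> V" and f: "bij_betw f X Y"
  shows "(\<Sum>x\<in>X. w (LCA r p x (f x))) \<le> tree_intersection V r p w X Y"
proof -
  have T: "rooted_tree V r p" using H by (simp add: hierarchy_def)
  then have "finite V" by (simp add: rooted_tree_def)
  then have "finite X" "finite Y" using assms(2,3) by (auto intro: finite_subset)
  have fY: "f x \<in> Y" if "x \<in> X" for x using f that bij_betwE by blast
  let ?P = "\<lambda>v x. v \<in> ancestors p x \<and> v \<in> ancestors p (f x)"
  let ?S = "\<lambda>v. {x\<in>X. ?P v x}"
  have "(\<Sum>x\<in>X. w (LCA r p x (f x))) = (\<Sum>x\<in>X. \<Sum>v\<in>V. if ?P v x then add_weight r p w v else 0)"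
  proof (rule sum.cong[OF refl])
    fix x assume "x \<in> X"
    then have "x \<in> V" "f x \<in> V" using fY assms(2,3) by auto
    then show "w (LCA r p x (f x)) = (\<Sum>v\<in>V. if ?P v x then add_weight r p w v else 0)"
      by (rule weight_LCA_eq_sum[OF T])
  qed
  also have "\<dots> = (\<Sum>v\<in>V. \<Sum>x\<in>X. if ?P v x then add_weight r p w v else 0)"
    by (rule sum.swap)
  also have "\<dots> = (\<Sum>v\<in>V. add_weight r p w v * real (card (?S v)))"
  proof (rule sum.cong[OF refl])
    fix v
    have "(\<Sum>x\<in>X. if ?P v x then add_weight r p w v else 0) = (\<Sum>x\<in>?S v. add_weight r p w v)"
      by (rule sum.inter_filter[OF \<open>finite X\<close>, symmetric])
    then show "(\<Sum>x\<in>X. if ?P v x then add_weight r p w v else 0) = add_weight r p w v * real (card (?S v))"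
      by simp
  qed
  also have "\<dots> \<le> tree_intersection V r p w X Y"
  proof (rule sum_mono, rule mult_left_mono)
    fix v assume "v \<in> V"
    then show "0 \<le> add_weight r p w v" by (rule add_weight_nonneg[OF H])
    have "inj_on f X" using f by (simp add: bij_betw_def)
    then have "card (?S v) = card (f ` ?S v)"
      by (intro card_image[symmetric], rule inj_on_subset) auto
    also have "\<dots> \<le> card (below p Y v)"
      using \<open>finite Y\<close> fY by (intro card_mono) (auto simp: below_def)
    finally have "card (?S v) \<le> card (below p Y v)" .
    moreover have "card (?S v) \<le> card (below p X v)"
      using \<open>finite X\<close> by (intro card_mono) (auto simp: below_def)
    ultimately show "real (card (?S v)) \<le> min (real (card (below p X v))) (real (card (below p Y v)))"
      by simp
  qed
  finally show ?thesis .
qed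

lemma below_empty_if_deepest_LCA:
  assumes T: "rooted_tree V r p" and "X \<subseteq> V" "Y \<subseteq> V" "x \<in> X" "y \<in> Y"
    and deepest: "\<And>a b. a \<in> X \<Longrightarrow> b \<in> Y \<Longrightarrow> depth r p (LCA r p a b) \<le> depth r p (LCA r p x y)"
    and "v \<in> ancestors p x" "v \<notin> ancestors p y"
  shows "below p Y v = {}"
proof (rule ccontr)
  let ?l = "LCA r p x y"
  assume "below p Y v \<noteq> {}"
  then obtain y' where "y' \<in> Y" "v \<in> ancestors p y'" unfolding below_def by auto
  have "x \<in> V" "y \<in> V" "y' \<in> V" "v \<in> V"
    using assms \<open>y' \<in> Y\<close> ancestors_subset[OF T] by blast+
  note L = LCA_deepest_common_ancestor[OF T \<open>x \<in> V\<close> \<open>y \<in> V\<close>]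
  have "v \<notin> ancestors p ?l"
    using L(1) ancestors_trans \<open>v \<notin> ancestors p y\<close> by fast
  then have "?l \<in> ancestors p v" "?l \<noteq> v"
    using ancestors_linear[of v p x ?l] \<open>v \<in> ancestors p x\<close> L(1) ancestors_refl by blast+
  then have "depth r p ?l < depth r p v"
    using depth_less_ancestor[OF T \<open>v \<in> V\<close>] by blast
  moreover have "depth r p v \<le> depth r p (LCA r p x y')"
    using LCA_deepest_common_ancestor(2)[OF T \<open>x \<in> V\<close> \<open>y' \<in> V\<close>] assms(7) \<open>v \<in> ancestors p y'\<close>
    by blast
  ultimately show False using deepest[OF \<open>x \<in> X\<close> \<open>y' \<in> Y\<close>] by linarith
qed

lemma min_card_Diff_singletons:
  assumes "finite A" "finite B"
    and "x \<in> A \<Longrightarrow> y \<notin> B \<Longrightarrow> B = {}" and "x \<notin> A \<Longrightarrow> y \<in> B \<Longrightarrow> A = {}"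
  shows "min (card A) (card B) =
    (if x \<in> A \<and> y \<in> B then 1 else 0) + min (card (A - {x})) (card (B - {y}))"
proof (cases "x \<in> A \<and> y \<in> B")
  case True
  then have "card A = Suc (card (A - {x}))" "card B = Suc (card (B - {y}))"
    using assms(1,2) card_Suc_Diff1 by metis+
  then show ?thesis using True by simp
next
  case False
  then show ?thesis using assms by (cases "x \<in> A"; cases "y \<in> B") auto
qed

lemma below_Diff: "below p (X - A) v = below p X v - A"
  unfolding below_def by auto

lemma tree_intersection_remove_deepest_pair:
  assumes T: "rooted_tree V r p" and "X \<subseteq> V" "Y \<subseteq> V" "x \<in> X" "y \<in> Y"
    and deepest: "\<And>a b. a \<in> X \<Longrightarrow> b \<in> Y \<Longrightarrow> depth r p (LCA r p a b) \<le> depth r p (LCA r p x y)"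
  shows "tree_intersection V r p w X Y =
    w (LCA r p x y) + tree_intersection V r p w (X - {x}) (Y - {y})"
proof -
  have "finite V" using T by (simp add: rooted_tree_def)
  then have "finite X" "finite Y" using assms(2,3) finite_subset by auto
  let ?common = "\<lambda>v. v \<in> ancestors p x \<and> v \<in> ancestors p y"
  have min_below: "min (card (below p X v)) (card (below p Y v)) =
      (if ?common v then 1 else 0) + min (card (below p (X - {x}) v)) (card (below p (Y - {y}) v))"
    for v
  proof -
    have "x \<in> below p X v \<longleftrightarrow> v \<in> ancestors p x" "y \<in> below p Y v \<longleftrightarrow> v \<in> ancestors p y"
      using assms(4,5) by (auto simp: below_def)
    moreover have "below p Y v = {}" if "v \<in> ancestors p x" "v \<notin> ancestors p y"
      using below_empty_if_deepest_LCA[OF assms that] .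
    moreover have "below p X v = {}" if "v \<in> ancestors p y" "v \<notin> ancestors p x"
    proof (rule below_empty_if_deepest_LCA[OF T assms(3,2,5,4) _ that])
      show "depth r p (LCA r p b a) \<le> depth r p (LCA r p y x)" if "b \<in> Y" "a \<in> X" for a b
        using deepest[OF that(2,1)] by (simp add: LCA_commute)
    qed
    moreover have "finite (below p X v)" "finite (below p Y v)"
      using \<open>finite X\<close> \<open>finite Y\<close> by (simp_all add: below_def)
    ultimately show ?thesis
      using min_card_Diff_singletons[of "below p X v" "below p Y v" x y] by (simp add: below_Diff)
  qed
  have "tree_intersection V r p w X Y =
      (\<Sum>v\<in>V. (if ?common v then add_weight r p w v else 0) +
        add_weight r p w v * min (real (card (below p (X - {x}) v))) (real (card (below p (Y - {y}) v))))"
    by (intro sum.cong refl)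
      (simp add: min_below of_nat_min[symmetric] distrib_left)
  also have "\<dots> = w (LCA r p x y) + tree_intersection V r p w (X - {x}) (Y - {y})"
    using weight_LCA_eq_sum[OF T, of x y w] assms(2-5) by (simp add: subsetD sum.distrib)
  finally show ?thesis .
qed

lemma tree_intersection_attained:
  assumes T: "rooted_tree V r p" and "X \<subseteq> V" "Y \<subseteq> V" "card X = card Y"
  shows "\<exists>f. bij_betw f X Y \<and> (\<Sum>x\<in>X. w (LCA r p x (f x))) = tree_intersection V r p w X Y"
  using assms(2-4)
proof (induction "card X" arbitrary: X Y)
  case 0
  have "finite V" using T by (simp add: rooted_tree_def)
  then have "finite X" "finite Y" using 0 by (auto intro: finite_subset)
  then have "X = {}" "Y = {}" using 0 by auto
  then show ?case by (auto simp: below_def bij_betw_def)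
next
  case (Suc n)
  have "finite V" using T by (simp add: rooted_tree_def)
  then have "finite X" "finite Y" using Suc.prems finite_subset by auto
  let ?d = "\<lambda>(a, b). depth r p (LCA r p a b)"
  have "X \<times> Y \<noteq> {}" using Suc.hyps Suc.prems by auto
  moreover have "finite (X \<times> Y)" using \<open>finite X\<close> \<open>finite Y\<close> by simp
  ultimately obtain q where "q \<in> X \<times> Y" and q_max: "Max (?d ` (X \<times> Y)) = ?d q"
    using obtains_MAX[of "X \<times> Y" ?d] by blast
  then obtain x y where xy: "x \<in> X" "y \<in> Y" and "q = (x, y)" by auto
  have deepest: "depth r p (LCA r p a b) \<le> depth r p (LCA r p x y)" if "a \<in> X" "b \<in> Y" for a b
  proof -
    have "?d (a, b) \<le> Max (?d ` (X \<times> Y))"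
      using that \<open>finite (X \<times> Y)\<close> by (intro Max_ge finite_imageI) auto
    then show ?thesis by (simp add: q_max \<open>q = (x, y)\<close>)
  qed
  have "n = card (X - {x})" "X - {x} \<subseteq> V" "Y - {y} \<subseteq> V" "card (X - {x}) = card (Y - {y})"
    using Suc.hyps(2) Suc.prems xy \<open>finite X\<close> \<open>finite Y\<close> by auto
  then obtain f' where f': "bij_betw f' (X - {x}) (Y - {y})"
    "(\<Sum>a\<in>X - {x}. w (LCA r p a (f' a))) = tree_intersection V r p w (X - {x}) (Y - {y})"
    using Suc.hyps(1) by blast
  define f where "f = f'(x := y)"
  have "bij_betw f {x} {y}" by (simp add: f_def bij_betw_def)
  moreover have "bij_betw f (X - {x}) (Y - {y})"
    using f'(1) by (rule bij_betw_cong[THEN iffD1, rotated]) (simp add: f_def)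
  ultimately have "bij_betw f ({x} \<union> (X - {x})) ({y} \<union> (Y - {y}))"
    by (rule bij_betw_combine) simp
  then have "bij_betw f X Y" using xy by (simp add: insert_absorb)
  moreover have "(\<Sum>a\<in>X. w (LCA r p a (f a))) = w (LCA r p x y) + (\<Sum>a\<in>X - {x}. w (LCA r p a (f' a)))"
  proof -
    have "(\<Sum>a\<in>X - {x}. w (LCA r p a (f a))) = (\<Sum>a\<in>X - {x}. w (LCA r p a (f' a)))"
      by (rule sum.cong) (auto simp: f_def)
    moreover have "f x = y" by (simp add: f_def)
    ultimately show ?thesis
      using sum.remove[OF \<open>finite X\<close> \<open>x \<in> X\<close>, of "\<lambda>a. w (LCA r p a (f a))"] by simp
  qed
  ultimately show ?case
    using f'(2) tree_intersection_remove_deepest_pair[OF T Suc.prems(1,2) xy deepest, of w] by auto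
qed

lemma opt_assign_cong:
  assumes "\<And>x y. x \<in> X \<Longrightarrow> y \<in> Y \<Longrightarrow> k x y = k' x y"
  shows "opt_assign k X Y = opt_assign k' X Y"
proof -
  have "(\<Sum>x\<in>X. k x (f x)) = (\<Sum>x\<in>X. k' x (f x))" if "bij_betw f X Y" for f
    using assms bij_betwE[OF that] by (intro sum.cong) auto
  then show ?thesis
    unfolding opt_assign_def by (intro arg_cong[where f = Max] Collect_cong) (metis (no_types, lifting))
qed

lemma opt_assign_eqI:
  assumes "finite X" "finite Y"
    and upper: "\<And>f. bij_betw f X Y \<Longrightarrow> (\<Sum>x\<in>X. k x (f x)) \<le> s"
    and "bij_betw g X Y" "(\<Sum>x\<in>X. k x (g x)) = s"
  shows "opt_assign k X Y = s"
  unfolding opt_assign_def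
proof (rule Max_eqI)
  let ?value = "\<lambda>f. \<Sum>x\<in>X. k x (f x)"
  have "{?value f | f. bij_betw f X Y} \<subseteq> ?value ` (X \<rightarrow>\<^sub>E Y)"
  proof clarify
    fix f assume "bij_betw f X Y"
    then have "restrict f X \<in> X \<rightarrow>\<^sub>E Y" "?value f = ?value (restrict f X)"
      using bij_betwE by auto
    then show "?value f \<in> ?value ` (X \<rightarrow>\<^sub>E Y)" by blast
  qed
  then show "finite {?value f | f. bij_betw f X Y}"
    by (rule finite_subset) (intro finite_imageI finite_PiE assms(1,2))
qed (use assms in auto)

lemma opt_assign_LCA_weight:
  assumes H: "hierarchy \<X> V r p w" and "X \<subseteq> V" "Y \<subseteq> V" "card X = card Y"
  shows "opt_assign (\<lambda>x y. w (LCA r p x y)) X Y = tree_intersection V r p w X Y"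
proof -
  have T: "rooted_tree V r p" using H by (simp add: hierarchy_def)
  then have "finite X" "finite Y" using assms(2,3) finite_subset by (auto simp: rooted_tree_def)
  obtain g where "bij_betw g X Y" "(\<Sum>x\<in>X. w (LCA r p x (g x))) = tree_intersection V r p w X Y"
    using tree_intersection_attained[OF T assms(2-4)] by blast
  then show ?thesis
    using \<open>finite X\<close> \<open>finite Y\<close> assignment_le_tree_intersection[OF H assms(2,3)]
    by (intro opt_assign_eqI) auto
qed

lemma hist_intersection_histogram:
  assumes "hierarchy \<X> V r p w"
  shows "hist_intersection V (histogram r p w X) (histogram r p w Y) = tree_intersection V r p w X Y"
  unfolding hist_intersection_def histogram_def
  using add_weight_nonneg[OF assms] by (intro sum.cong refl) (simp add: min_mult_distrib_left)

theorem theorem2: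
  fixes \<X> V :: "'v set" and r :: 'v and p :: "'v \<Rightarrow> 'v" and w :: "'v \<Rightarrow> real"
    and k :: "'v \<Rightarrow> 'v \<Rightarrow> real" and n :: nat and X Y :: "'v set"
  assumes "finite \<X>" and "\<X> \<noteq> {}"
    and "strong_kernel \<X> k"
    and "hierarchy \<X> V r p w"
    and "\<forall>x\<in>\<X>. \<forall>y\<in>\<X>. k x y = induced_kernel r p w x y"
    and "X \<subseteq> \<X>" and "Y \<subseteq> \<X>" and "card X = n" and "card Y = n"
  shows "opt_assign k X Y =
           (\<Sum>v\<in>V. add_weight r p w v * min (real (card (below p X v))) (real (card (below p Y v))))
       \<and> (\<Sum>v\<in>V. add_weight r p w v * min (real (card (below p X v))) (real (card (below p Y v))))
           = hist_intersection V (histogram r p w X) (histogram r p w Y)"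
proof
  have "\<X> \<subseteq> V" using assms(4) by (auto simp: hierarchy_def leaves_def)
  then have "X \<subseteq> V" "Y \<subseteq> V" using assms(6,7) by auto
  have "opt_assign k X Y = opt_assign (\<lambda>x y. w (LCA r p x y)) X Y"
    using assms(5-7) by (intro opt_assign_cong) (auto simp: induced_kernel_def)
  also have "\<dots> = tree_intersection V r p w X Y"
    using opt_assign_LCA_weight[OF assms(4) \<open>X \<subseteq> V\<close> \<open>Y \<subseteq> V\<close>] assms(8,9) by simp
  finally show "opt_assign k X Y = tree_intersection V r p w X Y" .
  show "tree_intersection V r p w X Y = hist_intersection V (histogram r p w X) (histogram r p w Y)"
    using hist_intersection_histogram[OF assms(4)] by simp
qed

end
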